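(* Let $k\in\{1,2,3\}$. A rule of a $3$-state $3$-neighbor vector-valued fuzzy cellular automaton ($3$-VFCA) is $k$-number-conserving if and only if the corresponding $3$-state $3$-neighbor vector-valued cellular automaton ($3$-VCA) is $k$-number-conserving.
   Context: Let $\bm{e}_1,\bm{e}_2,\bm{e}_3$ be the standard basis of $\mathbb{R}^3$ and $\Delta=\{(x_1,x_2,x_3)^{\top}\mid x_1+x_2+x_3=1,\ x_i\ge 0\}$. A $3$-VCA is given by a local rule $h:\{\bm{e}_1,\bm{e}_2,\bm{e}_3\}^3\to\{\bm{e}_1,\bm{e}_2,\bm{e}_3\}$; its cells $i\in\mathbb{Z}$ have states $\bm{x}_i^t\in\{\bm{e}_1,\bm{e}_2,\bm{e}_3\}$ evolving by $\bm{x}_i^{t+1}=h(\bm{x}_{i-1}^t,\bm{x}_i^t,\bm{x}_{i+1}^t)$. The corresponding $3$-VFCA has state set $\Delta$ and local rule $f:\Delta^3\to\Delta$, $f(\bm{x},\bm{y},\bm{z})=\sum_{j,k,\ell=1}^3 x_jy_kz_\ell\,h(\bm{e}_j,\bm{e}_k,\bm{e}_\ell)$, with the same update $\bm{x}_i^{t+1}=f(\bm{x}_{i-1}^t,\bm{x}_i^t,\bm{x}_{i+1}^t)$. Consider periodic configurations with positive integer period $L$, i.e. $\bm{x}_i^t=\bm{x}_{i+L}^t$. Writing $[\bm{x}]_k$ for the $k$th entry, set $\nu^t(k)=\sum_{i=1}^L[\bm{x}_i^t]_k$. The rule is $k$-number-conserving if $\nu^{t+1}(k)=\nu^t(k)$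 for all $t\in\mathbb{Z}_{\ge0}$ and every periodic initial configuration (of every period $L$), with states in $\{\bm{e}_1,\bm{e}_2,\bm{e}_3\}$ for the $3$-VCA and in $\Delta$ for the $3$-VFCA. *)

theory Defs
  imports "HOL-Analysis.Analysis"
begin

text \<open>States live in real^3, indexed by the numeral type 3 (indices 1,2,3).\<close>

definition e3 :: "3 \<Rightarrow> real^3" where
  "e3 j = axis j 1"

definition E3 :: "(real^3) set" where
  "E3 = range e3"

definition Delta :: "(real^3) set" where
  "Delta = {x. (\<forall>i. 0 \<le> x $ i) \<and> (\<Sum>i\<in>UNIV. x $ i) = 1}"

text \<open>A 3-VCA local rule: maps {e1,e2,e3}^3 into {e1,e2,e3}
  (its values outside E3 are irrelevant).\<close>
definition is_VCA_rule :: "(real^3 \<Rightarrow> real^3 \<Rightarrow> real^3 \<Rightarrow> real^3) \<Rightarrow> bool" where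
  "is_VCA_rule h \<longleftrightarrow> (\<forall>a\<in>E3. \<forall>b\<in>E3. \<forall>c\<in>E3. h a b c \<in> E3)"

definition fuzzify :: "(real^3 \<Rightarrow> real^3 \<Rightarrow> real^3 \<Rightarrow> real^3) \<Rightarrow> real^3 \<Rightarrow> real^3 \<Rightarrow> real^3 \<Rightarrow> real^3" where
  "fuzzify h x y z =
     (\<Sum>j\<in>UNIV. \<Sum>k\<in>UNIV. \<Sum>l\<in>UNIV. (x $ j * y $ k * z $ l) *\<^sub>R h (e3 j) (e3 k) (e3 l))"

definition ca_step :: "(real^3 \<Rightarrow> real^3 \<Rightarrow> real^3 \<Rightarrow> real^3) \<Rightarrow> (int \<Rightarrow> real^3) \<Rightarrow> (int \<Rightarrow> real^3)" where
  "ca_step rule c = (\<lambda>i. rule (c (i - 1)) (c i) (c (i + 1)))"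

definition nu :: "(real^3 \<Rightarrow> real^3 \<Rightarrow> real^3 \<Rightarrow> real^3) \<Rightarrow> (int \<Rightarrow> real^3) \<Rightarrow> int \<Rightarrow> nat \<Rightarrow> 3 \<Rightarrow> real" where
  "nu rule c L t k = (\<Sum>i\<in>{1..L}. ((ca_step rule ^^ t) c i) $ k)"

definition number_conserving :: "(real^3 \<Rightarrow> real^3 \<Rightarrow> real^3 \<Rightarrow> real^3) \<Rightarrow> (real^3) set \<Rightarrow> 3 \<Rightarrow> bool" where
  "number_conserving rule S k \<longleftrightarrow>
     (\<forall>L::int. L > 0 \<longrightarrow> (\<forall>c. (\<forall>i. c i \<in> S) \<and> (\<forall>i. c (i + L) = c i) \<longrightarrow>
        (\<forall>t. nu rule c L (Suc t) k = nu rule c L t k)))"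

end

theory Submission
  imports Defs
begin

(* If the 3-VCA h conserves the k-th count, evaluating conservation on the cyclic words
   e1 e1 b c and e1 e1 a b c shows that h has a flux form on basis states:
     h(a,b,c)_k = b_k + Psi(a,b) - Psi(b,c),   Psi(a,b) = a_k - h(e1,e1,a)_k - h(e1,a,b)_k.
   The multilinear extension fuzzify h inherits this form with the bilinear extension of Psi,
   as long as the outer arguments have coordinate sum 1, so the flux telescopes over a period
   of any configuration on the simplex. Conversely the simplex contains the basis states, on
   which fuzzify h agrees with h. *)

lemma e3_component: "e3 j $ i = (if i = j then 1 else 0)"
  by (simp add: e3_def axis_def)

lemma sum_e3: "(\<Sum>i\<in>UNIV. e3 j $ i) = 1"
  by (simp add: e3_component)

lemma E3_subset_Delta: "E3 \<subseteq> Delta"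
  by (auto simp: E3_def Delta_def e3_component sum_e3)

lemma sum_e3_component_mult: "(\<Sum>j\<in>UNIV. e3 a $ j * f j) = (f a :: real)"
  by (simp add: e3_component if_distrib[of "\<lambda>u. u * _"] cong: if_cong)

lemma sum_mult_e3_component: "(\<Sum>j\<in>UNIV. f j * e3 j $ a) = (f a :: real)"
  by (simp add: e3_component if_distrib[of "\<lambda>u. _ * u"] cong: if_cong)

lemma sum_product3:
  "(\<Sum>a\<in>A. \<Sum>b\<in>B. \<Sum>c\<in>C. f a * g b * h c) = sum f A * sum g B * (sum h C :: 'a::comm_semiring_0)"
proof -
  have "sum f A * sum g B * sum h C = (\<Sum>a\<in>A. \<Sum>b\<in>B. f a * g b) * sum h C"
    by (simp only: sum_product[of f A g B])
  also have "\<dots> = (\<Sum>a\<in>A. \<Sum>b\<in>B. f a * g b * sum h C)"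
    by (simp only: sum_distrib_right)
  also have "\<dots> = (\<Sum>a\<in>A. \<Sum>b\<in>B. \<Sum>c\<in>C. f a * g b * h c)"
    by (simp only: sum_distrib_left)
  finally show ?thesis ..
qed

lemma sum_components_sum:
  "(\<Sum>i\<in>UNIV. sum f A $ i) = (\<Sum>a\<in>A. \<Sum>i\<in>UNIV. f a $ i :: real)"
  by (simp add: sum_component sum.swap[of _ UNIV])

lemma fuzzify_component: "fuzzify h x y z $ m =
  (\<Sum>j\<in>UNIV. \<Sum>k\<in>UNIV. \<Sum>l\<in>UNIV. x $ j * y $ k * z $ l * h (e3 j) (e3 k) (e3 l) $ m)"
  by (simp add: fuzzify_def)

lemma fuzzify_e3: "fuzzify h (e3 a) (e3 b) (e3 c) = h (e3 a) (e3 b) (e3 c)"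
  by (simp add: vec_eq_iff fuzzify_component mult.assoc sum_distrib_left[symmetric] sum_e3_component_mult)

lemma fuzzify_eq_on_E3:
  "\<forall>x\<in>E3. \<forall>y\<in>E3. \<forall>z\<in>E3. fuzzify h x y z = h x y z"
  by (auto simp: E3_def fuzzify_e3)

lemma sum_fuzzify_eq_1:
  assumes h: "is_VCA_rule h" and x: "(\<Sum>i\<in>UNIV. x $ i) = 1"
    and y: "(\<Sum>i\<in>UNIV. y $ i) = 1" and z: "(\<Sum>i\<in>UNIV. z $ i) = 1"
  shows "(\<Sum>i\<in>UNIV. fuzzify h x y z $ i) = 1"
proof -
  have h_sum: "(\<Sum>i\<in>UNIV. h (e3 j) (e3 k) (e3 l) $ i) = 1" for j k l
  proof -
    have "h (e3 j) (e3 k) (e3 l) \<in> E3"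
      using h by (simp add: is_VCA_rule_def E3_def)
    then show ?thesis by (auto simp: E3_def sum_e3)
  qed
  have "(\<Sum>i\<in>UNIV. fuzzify h x y z $ i) =
    (\<Sum>j\<in>UNIV. \<Sum>k\<in>UNIV. \<Sum>l\<in>UNIV. x $ j * y $ k * z $ l * (\<Sum>i\<in>UNIV. h (e3 j) (e3 k) (e3 l) $ i))"
    unfolding fuzzify_def sum_components_sum by (simp add: sum_distrib_left)
  also have "\<dots> = (\<Sum>j\<in>UNIV. x $ j) * (\<Sum>k\<in>UNIV. y $ k) * (\<Sum>l\<in>UNIV. z $ l)"
    unfolding h_sum mult_1_right by (rule sum_product3)
  finally show ?thesis using x y z by simp
qed

lemma funpow_ca_step_closed:
  assumes "\<forall>x\<in>S. \<forall>y\<in>S. \<forall>z\<in>S. r x y z \<in> S" and "\<forall>i. c i \<in> S"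
  shows "(ca_step r ^^ t) c i \<in> S"
  using assms by (induction t arbitrary: i) (simp_all add: ca_step_def)

lemma funpow_ca_step_periodic:
  assumes "\<forall>i. c (i + L) = c i"
  shows "(ca_step r ^^ t) c (i + L) = (ca_step r ^^ t) c i"
proof (induction t arbitrary: i)
  case 0
  then show ?case using assms by simp
next
  case (Suc t)
  have step: "(ca_step r ^^ Suc t) c j =
      r ((ca_step r ^^ t) c (j - 1)) ((ca_step r ^^ t) c j) ((ca_step r ^^ t) c (j + 1))" for j
    by (simp add: ca_step_def)
  have "i + L - 1 = (i - 1) + L" and "i + L + 1 = (i + 1) + L"
    by simp_all
  then show ?case by (simp only: step Suc)
qed

lemma funpow_ca_step_cong:
  assumes eq: "\<forall>x\<in>S. \<forall>y\<in>S. \<forall>z\<in>S. r x y z = r' x y z"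
    and closed: "\<forall>x\<in>S. \<forall>y\<in>S. \<forall>z\<in>S. r x y z \<in> S" and c: "\<forall>i. c i \<in> S"
  shows "(ca_step r ^^ t) c = (ca_step r' ^^ t) c"
proof (induction t)
  case (Suc t)
  define d where "d = (ca_step r ^^ t) c"
  have "\<forall>i. d i \<in> S"
    unfolding d_def using funpow_ca_step_closed[OF closed c] by blast
  then have "ca_step r d = ca_step r' d"
    using eq by (simp add: ca_step_def)
  then show ?case
    using Suc by (simp add: d_def)
qed simp

lemma number_conserving_first_step:
  assumes "number_conserving r S k" and "L > 0" and "\<forall>i. c i \<in> S" and "\<forall>i. c (i + L) = c i"
  shows "(\<Sum>i\<in>{1..L}. ca_step r c i $ k) = (\<Sum>i\<in>{1..L}. c i $ k)"
proof -
  have "nu r c L (Suc 0) k = nu r c L 0 k"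
    using assms unfolding number_conserving_def by blast
  then show ?thesis
    by (simp add: nu_def)
qed

lemma number_conservingI:
  assumes closed: "\<forall>x\<in>S. \<forall>y\<in>S. \<forall>z\<in>S. r x y z \<in> S"
    and first_step: "\<And>L c. L > 0 \<Longrightarrow> \<forall>i. c i \<in> S \<Longrightarrow> \<forall>i. c (i + L) = c i \<Longrightarrow>
      (\<Sum>i\<in>{1..L}. ca_step r c i $ k) = (\<Sum>i\<in>{1..L}. c i $ k)"
  shows "number_conserving r S k"
  unfolding number_conserving_def
proof (intro allI impI)
  fix L :: int and c t
  assume "L > 0" and c: "(\<forall>i. c i \<in> S) \<and> (\<forall>i. c (i + L) = c i)"
  have "\<forall>i. (ca_step r ^^ t) c i \<in> S"
    using funpow_ca_step_closed[OF closed] c by blast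
  moreover have "\<forall>i. (ca_step r ^^ t) c (i + L) = (ca_step r ^^ t) c i"
    using funpow_ca_step_periodic c by blast
  ultimately have "(\<Sum>i\<in>{1..L}. ca_step r ((ca_step r ^^ t) c) i $ k) = (\<Sum>i\<in>{1..L}. (ca_step r ^^ t) c i $ k)"
    using first_step[OF \<open>L > 0\<close>] by blast
  then show "nu r c L (Suc t) k = nu r c L t k"
    by (simp add: nu_def)
qed

lemma number_conserving_subset:
  "number_conserving r S k \<Longrightarrow> T \<subseteq> S \<Longrightarrow> number_conserving r T k"
  unfolding number_conserving_def by blast

lemma number_conserving_cong:
  assumes "number_conserving r' S k"
    and "\<forall>x\<in>S. \<forall>y\<in>S. \<forall>z\<in>S. r x y z = r' x y z"
    and "\<forall>x\<in>S. \<forall>y\<in>S. \<forall>z\<in>S. r x y z \<in> S"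
  shows "number_conserving r S k"
  unfolding number_conserving_def
proof (intro allI impI)
  fix L :: int and c t
  assume "L > 0" and c: "(\<forall>i. c i \<in> S) \<and> (\<forall>i. c (i + L) = c i)"
  then have "nu r' c L (Suc t) k = nu r' c L t k"
    using assms(1) unfolding number_conserving_def by blast
  moreover have "nu r c L t' k = nu r' c L t' k" for t'
    unfolding nu_def using funpow_ca_step_cong[OF assms(2,3)] c by simp
  ultimately show "nu r c L (Suc t) k = nu r c L t k"
    by simp
qed

lemma sum_int_telescope:
  "(L::int) \<ge> 0 \<Longrightarrow> (\<Sum>i\<in>{1..L}. (g (i - 1) - g i :: real)) = g 0 - g L"
proof (induction L rule: int_ge_induct)
  case (step L)
  have "{1..L + 1} = insert (L + 1) {1..L}"
    using step by auto
  then show ?case using step by simp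
qed simp

lemma number_conserving_if_flux:
  assumes closed: "\<forall>x\<in>S. \<forall>y\<in>S. \<forall>z\<in>S. r x y z \<in> S"
    and flux: "\<And>x y z. x \<in> S \<Longrightarrow> y \<in> S \<Longrightarrow> z \<in> S \<Longrightarrow> r x y z $ k = y $ k + F x y - F y z"
  shows "number_conserving r S k"
proof (rule number_conservingI[OF closed])
  fix L :: int and c
  assume "L > 0" and c: "\<forall>i. c i \<in> S" and periodic: "\<forall>i. c (i + L) = c i"
  define P where "P i = F (c i) (c (i + 1))" for i
  have "(\<Sum>i\<in>{1..L}. ca_step r c i $ k) = (\<Sum>i\<in>{1..L}. c i $ k + (P (i - 1) - P i))"
    using c by (intro sum.cong) (simp_all add: ca_step_def P_def flux)
  also have "\<dots> = (\<Sum>i\<in>{1..L}. c i $ k) + (P 0 - P L)"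
    using \<open>L > 0\<close> by (simp add: sum.distrib sum_int_telescope)
  also have "P L = P 0"
    using periodic[rule_format, of 0] periodic[rule_format, of 1]
    by (simp add: P_def add.commute)
  finally show "(\<Sum>i\<in>{1..L}. ca_step r c i $ k) = (\<Sum>i\<in>{1..L}. c i $ k)"
    by simp
qed

definition cyclic_config :: "(real^3) list \<Rightarrow> int \<Rightarrow> real^3" where
  "cyclic_config ws i = ws ! nat (i mod int (length ws))"

lemma number_conserving_cyclic_config:
  assumes nc: "number_conserving r S k" and ws: "set ws \<subseteq> S" "ws \<noteq> []"
  shows "(\<Sum>i\<in>{1..int (length ws)}. ca_step r (cyclic_config ws) i $ k)
       = (\<Sum>i\<in>{1..int (length ws)}. cyclic_config ws i $ k)"
proof (rule number_conserving_first_step[OF nc])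
  show "int (length ws) > 0"
    using ws(2) by simp
  show "\<forall>i. cyclic_config ws i \<in> S"
  proof
    fix i
    have "nat (i mod int (length ws)) < length ws"
      using ws(2) by (simp add: nat_less_iff)
    then show "cyclic_config ws i \<in> S"
      using ws(1) by (auto simp: cyclic_config_def)
  qed
  show "\<forall>i. cyclic_config ws (i + int (length ws)) = cyclic_config ws i"
    by (simp add: cyclic_config_def)
qed

definition vca_flux :: "(real^3 \<Rightarrow> real^3 \<Rightarrow> real^3 \<Rightarrow> real^3) \<Rightarrow> 3 \<Rightarrow> 3 \<Rightarrow> 3 \<Rightarrow> real" where
  "vca_flux h k a b = e3 a $ k - h (e3 1) (e3 1) (e3 a) $ k - h (e3 1) (e3 a) (e3 b) $ k"

lemma vca_flux_form:
  assumes nc: "number_conserving h E3 k"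
  shows "h (e3 a) (e3 b) (e3 c) $ k = e3 b $ k + vca_flux h k a b - vca_flux h k b c"
proof -
  have in_E3: "set ws \<subseteq> E3" if "set ws \<subseteq> range e3" for ws
    using that by (simp add: E3_def)
  have "{1..4::int} = {1, 2, 3, 4}" and "{1..5::int} = {1, 2, 3, 4, 5}"
    by auto
  then have "h (e3 c) (e3 1) (e3 1) $ k + h (e3 1) (e3 1) (e3 b) $ k + h (e3 1) (e3 b) (e3 c) $ k
      + h (e3 b) (e3 c) (e3 1) $ k = e3 1 $ k + e3 1 $ k + e3 b $ k + e3 c $ k"
    and "h (e3 c) (e3 1) (e3 1) $ k + h (e3 1) (e3 1) (e3 a) $ k + h (e3 1) (e3 a) (e3 b) $ k
      + h (e3 a) (e3 b) (e3 c) $ k + h (e3 b) (e3 c) (e3 1) $ k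
      = e3 1 $ k + e3 1 $ k + e3 a $ k + e3 b $ k + e3 c $ k"
    using number_conserving_cyclic_config[OF nc in_E3, of "[e3 1, e3 1, e3 b, e3 c]"]
      number_conserving_cyclic_config[OF nc in_E3, of "[e3 1, e3 1, e3 a, e3 b, e3 c]"]
    by (simp_all add: ca_step_def cyclic_config_def algebra_simps)
  then show ?thesis
    unfolding vca_flux_def by linarith
qed

definition fuzzy_flux :: "(real^3 \<Rightarrow> real^3 \<Rightarrow> real^3 \<Rightarrow> real^3) \<Rightarrow> 3 \<Rightarrow> real^3 \<Rightarrow> real^3 \<Rightarrow> real" where
  "fuzzy_flux h k x y = (\<Sum>a\<in>UNIV. \<Sum>b\<in>UNIV. x $ a * y $ b * vca_flux h k a b)"

lemma fuzzify_flux_form: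
  assumes nc: "number_conserving h E3 k"
    and x: "(\<Sum>i\<in>UNIV. x $ i) = 1" and z: "(\<Sum>i\<in>UNIV. z $ i) = 1"
  shows "fuzzify h x y z $ k = y $ k + fuzzy_flux h k x y - fuzzy_flux h k y z"
proof -
  let ?w = "\<lambda>a b c. x $ a * y $ b * z $ c"
  have "fuzzify h x y z $ k = (\<Sum>a\<in>UNIV. \<Sum>b\<in>UNIV. \<Sum>c\<in>UNIV. ?w a b c * e3 b $ k)
     + (\<Sum>a\<in>UNIV. \<Sum>b\<in>UNIV. \<Sum>c\<in>UNIV. ?w a b c * vca_flux h k a b)
     - (\<Sum>a\<in>UNIV. \<Sum>b\<in>UNIV. \<Sum>c\<in>UNIV. ?w a b c * vca_flux h k b c)"
    unfolding fuzzify_component vca_flux_form[OF nc]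
    by (simp add: algebra_simps sum.distrib sum_subtractf)
  moreover have "(\<Sum>a\<in>UNIV. \<Sum>b\<in>UNIV. \<Sum>c\<in>UNIV. ?w a b c * e3 b $ k) = y $ k"
  proof -
    have "(\<Sum>a\<in>UNIV. \<Sum>b\<in>UNIV. \<Sum>c\<in>UNIV. ?w a b c * e3 b $ k)
       = (\<Sum>a\<in>UNIV. x $ a) * (\<Sum>b\<in>UNIV. y $ b * e3 b $ k) * (\<Sum>c\<in>UNIV. z $ c)"
      unfolding sum_product3[symmetric] by (simp add: mult_ac)
    then show ?thesis
      using x z by (simp add: sum_mult_e3_component)
  qed
  moreover have "(\<Sum>a\<in>UNIV. \<Sum>b\<in>UNIV. \<Sum>c\<in>UNIV. ?w a b c * vca_flux h k a b) = fuzzy_flux h k x y"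
  proof -
    have "(\<Sum>a\<in>UNIV. \<Sum>b\<in>UNIV. \<Sum>c\<in>UNIV. ?w a b c * vca_flux h k a b)
       = (\<Sum>a\<in>UNIV. \<Sum>b\<in>UNIV. x $ a * y $ b * vca_flux h k a b * (\<Sum>c\<in>UNIV. z $ c))"
      by (simp only: sum_distrib_left) (simp add: mult_ac)
    then show ?thesis
      using z by (simp add: fuzzy_flux_def)
  qed
  moreover have "(\<Sum>a\<in>UNIV. \<Sum>b\<in>UNIV. \<Sum>c\<in>UNIV. ?w a b c * vca_flux h k b c) = fuzzy_flux h k y z"
  proof -
    have "(\<Sum>a\<in>UNIV. \<Sum>b\<in>UNIV. \<Sum>c\<in>UNIV. ?w a b c * vca_flux h k b c)
       = (\<Sum>a\<in>UNIV. x $ a * fuzzy_flux h k y z)"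
      by (simp add: fuzzy_flux_def sum_distrib_left mult.assoc)
    then show ?thesis
      using x by (simp flip: sum_distrib_right)
  qed
  ultimately show ?thesis
    by simp
qed

theorem mainTheorem2:
  fixes h :: "real^3 \<Rightarrow> real^3 \<Rightarrow> real^3 \<Rightarrow> real^3" and k :: 3
  assumes "is_VCA_rule h"
  shows "number_conserving (fuzzify h) Delta k \<longleftrightarrow> number_conserving h E3 k"
proof
  assume "number_conserving (fuzzify h) Delta k"
  then have "number_conserving (fuzzify h) E3 k"
    using E3_subset_Delta by (rule number_conserving_subset)
  moreover have "\<forall>x\<in>E3. \<forall>y\<in>E3. \<forall>z\<in>E3. h x y z = fuzzify h x y z"
    using fuzzify_eq_on_E3 by simp
  ultimately show "number_conserving h E3 k"
    using assms unfolding is_VCA_rule_def by (rule number_conserving_cong)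
next
  assume nc: "number_conserving h E3 k"
  let ?S = "{x::real^3. (\<Sum>i\<in>UNIV. x $ i) = 1}"
  have "number_conserving (fuzzify h) ?S k"
  proof (rule number_conserving_if_flux[where F = "fuzzy_flux h k"])
    show "\<forall>x\<in>?S. \<forall>y\<in>?S. \<forall>z\<in>?S. fuzzify h x y z \<in> ?S"
      using sum_fuzzify_eq_1[OF assms] by simp
    show "fuzzify h x y z $ k = y $ k + fuzzy_flux h k x y - fuzzy_flux h k y z"
      if "x \<in> ?S" and "z \<in> ?S" for x y z
      using that by (simp add: fuzzify_flux_form[OF nc])
  qed
  then show "number_conserving (fuzzify h) Delta k"
    by (rule number_conserving_subset) (auto simp: Delta_def)
qed

end
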